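(* Let $n\ge 1$. The totally nonnegative complete flag variety $\mathrm{Fl}_n^{\geq 0}$ equals the set $\{F\in \mathrm{Fl}_n \mid P_I(F)\geq 0 \text{ for all } I\subseteq [n]\}$, i.e. a complete flag $F$ lies in $\mathrm{Fl}_n^{\ge 0}$ if and only if it has a representing matrix all of whose flag minors are nonnegative.
   Context: $\mathrm{Fl}_n$ is the real complete flag variety: the set of chains $\{0\}=V_0\subsetneq V_1\subsetneq\cdots\subsetneq V_n=\mathbb{R}^n$ of linear subspaces. A flag is represented by an invertible real $n\times n$ matrix $M$ such that $V_i$ is the span of the top $i$ rows of $M$; two matrices represent the same flag iff they differ by left multiplication by an invertible lower triangular matrix. For $I\subseteq[n]$, the Plücker coordinate (flag minor) $P_I(M)$ is the determinant of the submatrix of $M$ in rows $1,\dots,|I|$ and columns $I$; for a flag $F$, $(P_I(F))_I$ is defined up to a positive or negative rescaling of each group $\{P_I: |I|=k\}$, and "$P_I(F)\ge 0$ for all $I$" means that some representing matrix $M$ of $F$ has $P_I(M)\ge 0$ for all $I\subseteq[n]$. A real matrix is totally positive if all its minors are positive. $\mathrm{Fl}_n^{>0}$ is the set of flags having a totally positive representing matrix, and $\mathrm{Fl}_n^{\geq 0}$ is the closure of $\mathrm{Fl}_n^{>0}$ in $\mathrm{Fl}_n$ in the Euclidean topology. *)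

theory Defs
  imports "HOL-Analysis.Analysis"
begin

text \<open>Real n x n matrices are encoded as functions nat => nat => real that vanish
outside the index range {0..<n} x {0..<n} (rows/columns are 0-based, so the paper's
row i is our row i-1). The function space carries the product topology, which on these
matrices is the Euclidean topology.\<close>

definition sqmats :: "nat \<Rightarrow> (nat \<Rightarrow> nat \<Rightarrow> real) set" where
  "sqmats n = {M. \<forall>i j. (n \<le> i \<or> n \<le> j) \<longrightarrow> M i j = 0}"

definition detk :: "nat \<Rightarrow> (nat \<Rightarrow> nat \<Rightarrow> real) \<Rightarrow> real" where
  "detk k A = (\<Sum>p\<in>{p. p permutes {..<k}}. of_int (sign p) * (\<Prod>i<k. A i (p i)))"

definition minor :: "(nat \<Rightarrow> nat \<Rightarrow> real) \<Rightarrow> nat set \<Rightarrow> nat set \<Rightarrow> real" where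
  "minor M R C = detk (card R)
     (\<lambda>i j. M (sorted_list_of_set R ! i) (sorted_list_of_set C ! j))"

definition GLn :: "nat \<Rightarrow> (nat \<Rightarrow> nat \<Rightarrow> real) set" where
  "GLn n = {M \<in> sqmats n. detk n M \<noteq> 0}"

definition flag_minor :: "(nat \<Rightarrow> nat \<Rightarrow> real) \<Rightarrow> nat set \<Rightarrow> real" where
  "flag_minor M I = minor M {..<card I} I"

definition totally_positive :: "nat \<Rightarrow> (nat \<Rightarrow> nat \<Rightarrow> real) \<Rightarrow> bool" where
  "totally_positive n M \<longleftrightarrow>
     (\<forall>R C. R \<subseteq> {..<n} \<and> C \<subseteq> {..<n} \<and> R \<noteq> {} \<and> card R = card C \<longrightarrow> minor M R C > 0)"

definition flag_of :: "nat \<Rightarrow> (nat \<Rightarrow> nat \<Rightarrow> real) \<Rightarrow> nat \<Rightarrow> (nat \<Rightarrow> real) set" where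
  "flag_of n M = (\<lambda>k. if k \<le> n then {v. \<exists>c. v = (\<lambda>j. \<Sum>i<k. c i * M i j)} else {})"

definition Fl :: "nat \<Rightarrow> (nat \<Rightarrow> (nat \<Rightarrow> real) set) set" where
  "Fl n = flag_of n ` GLn n"

text \<open>Euclidean topology on Fl_n: the quotient topology induced by GL_n -> Fl_n.\<close>
definition Fl_topology :: "nat \<Rightarrow> (nat \<Rightarrow> (nat \<Rightarrow> real) set) topology" where
  "Fl_topology n = topology (\<lambda>U. U \<subseteq> Fl n \<and>
       openin (top_of_set (GLn n)) {M \<in> GLn n. flag_of n M \<in> U})"

definition Fl_pos :: "nat \<Rightarrow> (nat \<Rightarrow> (nat \<Rightarrow> real) set) set" where
  "Fl_pos n = flag_of n ` {M \<in> GLn n. totally_positive n M}"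

definition Fl_nonneg :: "nat \<Rightarrow> (nat \<Rightarrow> (nat \<Rightarrow> real) set) set" where
  "Fl_nonneg n = (Fl_topology n) closure_of (Fl_pos n)"

end

theory Submission
  imports Defs Jordan_Normal_Form.Determinant
begin

text \<open>
Two representatives of a flag differ by a lower-triangular factor K with nonzero diagonal,
which multiplies every k-element flag minor by K_00 * ... * K_(k-1)(k-1). So a flag has a
representative with nonnegative flag minors iff, for each k, the k-element flag minors of any
one representative have a common weak sign. This is a closed condition on GL_n, satisfied by
totally positive matrices, so the set it defines contains the closure of Fl_n^>0.

Conversely, let M have nonnegative flag minors and let G(t) = (t^((i-j)^2)). By Cauchy--Binet
every flag minor of M G(t) is a polynomial in t, and by the rearrangement inequality its
lowest-order coefficient is a sum of positive flag minors of M. Hence for small t > 0 the matrix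
X = M G(t), which is close to M, has positive flag minors. Multiplying X on the left by the
lower-triangular L(s) = (s^(N j + (i-j)^2)) (j <= i), N = n^3 + 1, keeps the flag, and for small
s > 0 the lowest-order term of the minor of L(s) X with rows R and columns C is the flag minor
P_C(X) > 0, so L(s) X is totally positive.
\<close>

abbreviation jnf_mat :: "nat \<Rightarrow> (nat \<Rightarrow> nat \<Rightarrow> real) \<Rightarrow> real mat" where
  "jnf_mat k A \<equiv> Matrix.mat k k (\<lambda>(i, j). A i j)"

lemma detk_eq_det: "detk k A = Determinant.det (jnf_mat k A)"
  unfolding detk_def Determinant.det_def
  by (auto simp: atLeast0LessThan intro!: sum.cong prod.cong)

lemma detk_cong:
  "(\<And>i j. i < k \<Longrightarrow> j < k \<Longrightarrow> A i j = B i j) \<Longrightarrow> detk k A = detk k B"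
  unfolding detk_def
  by (intro sum.cong refl prod.cong arg_cong2[where f="(*)"]) (auto dest: permutes_in_image)

lemma detk_0 [simp]: "detk 0 A = 1"
  unfolding detk_def by simp

lemma detk_identical_rows:
  assumes "i < k" "j < k" "i \<noteq> j" "\<And>c. c < k \<Longrightarrow> A i c = A j c"
  shows "detk k A = 0"
  unfolding detk_eq_det
  by (rule det_identical_rows[of _ k i j]) (use assms in \<open>auto intro!: eq_vecI\<close>)

lemma detk_permute_rows:
  assumes "p permutes {..<k}"
  shows "detk k (\<lambda>i j. A (p i) j) = of_int (sign p) * detk k A"
proof -
  have p: "p permutes {0..<k}" using assms by (simp add: atLeast0LessThan)
  have "jnf_mat k (\<lambda>i j. A (p i) j) = Matrix.mat k k (\<lambda>(i, j). jnf_mat k A $$ (p i, j))"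
    by (rule eq_matI) (use p in \<open>auto dest: permutes_in_image\<close>)
  then show ?thesis
    unfolding detk_eq_det using det_permute_rows[OF _ p, of "jnf_mat k A"] by simp
qed

lemma detk_mult: "detk k (\<lambda>i j. \<Sum>l<k. A i l * B l j) = detk k A * detk k B"
proof -
  have "jnf_mat k (\<lambda>i j. \<Sum>l<k. A i l * B l j) = jnf_mat k A * jnf_mat k B"
    by (rule eq_matI) (auto simp: scalar_prod_def atLeast0LessThan intro!: sum.cong)
  then show ?thesis
    unfolding detk_eq_det using det_mult[of "jnf_mat k A" k "jnf_mat k B"] by simp
qed

lemma detk_lower_triangular:
  assumes "\<And>i j. i < j \<Longrightarrow> j < k \<Longrightarrow> A i j = 0"
  shows "detk k A = (\<Prod>i<k. A i i)"
proof -
  have "detk k A = prod_list (diag_mat (jnf_mat k A))"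
    unfolding detk_eq_det by (rule det_lower_triangular[where n=k]) (use assms in auto)
  also have "\<dots> = (\<Prod>i<k. A i i)"
    by (simp add: diag_mat_def prod.list_conv_set_nth atLeast0LessThan lessThan_def)
  finally show ?thesis .
qed

lemma detk_nonzero_imp_inverse:
  assumes "detk k A \<noteq> 0"
  obtains B where
    "\<And>i j. i < k \<Longrightarrow> j < k \<Longrightarrow> (\<Sum>l<k. A i l * B l j) = (if i = j then 1 else 0)"
    "\<And>i j. i < k \<Longrightarrow> j < k \<Longrightarrow> (\<Sum>l<k. B i l * A l j) = (if i = j then 1 else 0)"
proof -
  have "jnf_mat k A \<in> Units (ring_mat TYPE(real) k undefined)"
    by (rule det_non_zero_imp_unit) (use assms in \<open>auto simp: detk_eq_det\<close>)
  then obtain B where B: "B \<in> carrier_mat k k" "B * jnf_mat k A = 1\<^sub>m k" "jnf_mat k A * B = 1\<^sub>m k"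
    unfolding Units_def by (auto simp: ring_mat_simps)
  show ?thesis
  proof (rule that[of "\<lambda>i j. B $$ (i, j)"])
    fix i j assume ij: "i < k" "j < k"
    have "(\<Sum>l<k. A i l * B $$ (l, j)) = (jnf_mat k A * B) $$ (i, j)"
      using ij B(1) by (simp add: scalar_prod_def atLeast0LessThan)
    then show "(\<Sum>l<k. A i l * B $$ (l, j)) = (if i = j then 1 else 0)"
      using ij B(3) by simp
    have "(\<Sum>l<k. B $$ (i, l) * A l j) = (B * jnf_mat k A) $$ (i, j)"
      using ij B(1) by (simp add: scalar_prod_def atLeast0LessThan)
    then show "(\<Sum>l<k. B $$ (i, l) * A l j) = (if i = j then 1 else 0)"
      using ij B(2) by simp
  qed
qed

section \<open>The Cauchy--Binet formula\<close>

abbreviation sl :: "'a::linorder set \<Rightarrow> 'a list" where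
  "sl J \<equiv> sorted_list_of_set J"

lemma bij_betw_sl_nth: "finite J \<Longrightarrow> bij_betw ((!) (sl J)) {..<card J} J"
  by (rule bij_betw_nth) auto

lemma sl_nth_mem: "finite J \<Longrightarrow> a < card J \<Longrightarrow> sl J ! a \<in> J"
  by (metis length_sorted_list_of_set nth_mem set_sorted_list_of_set)

lemma sl_nth_strict_mono: "finite J \<Longrightarrow> a < b \<Longrightarrow> b < card J \<Longrightarrow> sl J ! a < sl J ! b"
  using sorted_wrt_nth_less[OF strict_sorted_list_of_set[of J]] by simp

lemma sl_lessThan_nth: "a < k \<Longrightarrow> sl {..<k} ! a = a"
  by (simp add: lessThan_atLeast0)

lemma sl_nth_ge:
  assumes "finite (J :: nat set)" "a < card J"
  shows "a \<le> sl J ! a"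
  using assms(2)
proof (induction a)
  case (Suc a)
  then show ?case using sl_nth_strict_mono[OF assms(1), of a "Suc a"] by simp
qed simp

lemma card_le_if_subset_lessThan: "I \<subseteq> {..<n} \<Longrightarrow> card I \<le> n"
  using card_mono[of "{..<n}" I] by simp

lemma sum_sl_nth_gt:
  assumes "finite (J :: nat set)" "card J = k" "J \<noteq> {..<k}"
  shows "(\<Sum>a<k. a) < (\<Sum>a<k. sl J ! a)"
proof (rule sum_strict_mono_ex1)
  show "\<forall>a\<in>{..<k}. a \<le> sl J ! a" using sl_nth_ge assms by auto
  have "sl J \<noteq> [0..<k]"
    using assms by (metis atLeast_upt set_sorted_list_of_set)
  then obtain a where "a < k" "sl J ! a \<noteq> a"
    using assms by (metis diff_zero length_sorted_list_of_set length_upt nth_equalityI nth_upt plus_nat.add_0)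
  then show "\<exists>a\<in>{..<k}. a < sl J ! a" using sl_nth_ge[OF assms(1), of a] assms by force
qed simp

lemma image_sl_nth_permutes:
  assumes "finite J" "\<tau> permutes {..<card J}"
  shows "(\<lambda>i. sl J ! \<tau> i) ` {..<card J} = J"
proof -
  have "(\<lambda>i. sl J ! \<tau> i) ` {..<card J} = (!) (sl J) ` \<tau> ` {..<card J}" by auto
  then show ?thesis
    using bij_betw_sl_nth[OF assms(1)] assms(2) by (simp add: permutes_image bij_betw_def)
qed

lemma permutes_inv_into_sl_nth:
  assumes "inj_on f {..<k}"
  shows "(\<lambda>i. if i < k then inv_into {..<k} ((!) (sl (f ` {..<k}))) (f i) else i) permutes {..<k}"
proof -
  have "bij_betw ((!) (sl (f ` {..<k}))) {..<k} (f ` {..<k})"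
    using bij_betw_sl_nth[of "f ` {..<k}"] assms by (simp add: card_image)
  moreover have "bij_betw f {..<k} (f ` {..<k})"
    using assms by (rule inj_on_imp_bij_betw)
  ultimately have "bij_betw (inv_into {..<k} ((!) (sl (f ` {..<k}))) \<circ> f) {..<k} {..<k}"
    by (metis bij_betw_inv_into bij_betw_trans)
  then have "bij_betw (\<lambda>i. if i < k then inv_into {..<k} ((!) (sl (f ` {..<k}))) (f i) else i) {..<k} {..<k}"
    by (rule bij_betw_cong[THEN iffD1, rotated]) auto
  then show ?thesis
    by (rule bij_imp_permutes) auto
qed

lemma bij_betw_subsets_permutations_injections:
  fixes S :: "'a::linorder set"
  assumes "finite S"
  shows "bij_betw (\<lambda>(J, \<tau>). restrict (\<lambda>i. sl J ! \<tau> i) {..<k})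
     (SIGMA J:{J. J \<subseteq> S \<and> card J = k}. {\<tau>. \<tau> permutes {..<k}})
     {f \<in> {..<k} \<rightarrow>\<^sub>E S. inj_on f {..<k}}"
    (is "bij_betw ?g ?P ?F")
proof -
  define h where "h f = (f ` {..<k}, \<lambda>i. if i < k then inv_into {..<k} ((!) (sl (f ` {..<k}))) (f i) else i)"
    for f :: "nat \<Rightarrow> 'a"
  have fin: "finite J" if "J \<subseteq> S" for J
    using assms that finite_subset by auto
  have hg: "h (?g (J, \<tau>)) = (J, \<tau>)" if J: "J \<subseteq> S" "card J = k" and \<tau>: "\<tau> permutes {..<k}" for J \<tau>
  proof -
    have "inv_into {..<k} ((!) (sl J)) (sl J ! \<tau> i) = \<tau> i" if "i < k" for i
      using bij_betw_sl_nth[OF fin[OF J(1)]] \<tau> that J(2)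
      by (metis bij_betw_def inv_into_f_f lessThan_iff permutes_in_image)
    then have "(\<lambda>i. if i < k then inv_into {..<k} ((!) (sl J)) (?g (J, \<tau>) i) else i) = \<tau>"
      by (auto simp: fun_eq_iff permutes_not_in[OF \<tau>])
    moreover have img: "?g (J, \<tau>) ` {..<k} = J"
      using image_sl_nth_permutes[OF fin[OF J(1)]] \<tau> J(2) by simp
    ultimately show ?thesis unfolding h_def img by simp
  qed
  have gh: "?g (h f) = f" if f: "f \<in> {..<k} \<rightarrow>\<^sub>E S" "inj_on f {..<k}" for f
  proof
    fix i
    have "bij_betw ((!) (sl (f ` {..<k}))) {..<k} (f ` {..<k})"
      using bij_betw_sl_nth[of "f ` {..<k}"] f(2) by (simp add: card_image)
    then have "sl (f ` {..<k}) ! inv_into {..<k} ((!) (sl (f ` {..<k}))) (f i) = f i" if "i < k"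
      using that by (simp add: bij_betw_def f_inv_into_f)
    then show "?g (h f) i = f i"
      using PiE_arb[OF f(1), of i] by (cases "i < k") (simp_all add: h_def)
  qed
  have g_into: "?g (J, \<tau>) \<in> ?F" if J: "J \<subseteq> S" "card J = k" and \<tau>: "\<tau> permutes {..<k}" for J \<tau>
  proof -
    have "(\<lambda>i. sl J ! \<tau> i) ` {..<k} = J"
      using image_sl_nth_permutes[OF fin[OF J(1)]] \<tau> J(2) by simp
    moreover from this have "inj_on (\<lambda>i. sl J ! \<tau> i) {..<k}"
      using J fin by (intro eq_card_imp_inj_on) auto
    ultimately show ?thesis using J(1) by (auto simp: inj_on_def)
  qed
  have h_into: "h f \<in> ?P" if "f \<in> {..<k} \<rightarrow>\<^sub>E S" "inj_on f {..<k}" for f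
    using that permutes_inv_into_sl_nth[of f k] by (auto simp: h_def card_image)
  show ?thesis
  proof (rule bij_betw_byWitness[where f'=h])
    show "\<forall>x\<in>?P. h (?g x) = x" using hg by force
    show "\<forall>f\<in>?F. ?g (h f) = f" using gh by blast
    show "?g ` ?P \<subseteq> ?F" using g_into by force
    show "h ` ?F \<subseteq> ?P" using h_into by blast
  qed
qed

lemma detk_expand_rows:
  fixes n :: nat
  shows "detk k (\<lambda>i j. \<Sum>l<n. A i l * B l j) =
     (\<Sum>f | f \<in> {..<k} \<rightarrow>\<^sub>E {..<n} \<and> inj_on f {..<k}. (\<Prod>i<k. A i (f i)) * detk k (\<lambda>i j. B (f i) j))"
proof -
  let ?g = "\<lambda>f. (\<Prod>i<k. A i (f i)) * detk k (\<lambda>i j. B (f i) j)"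
  have prod_sum: "(\<Prod>i<k. \<Sum>l<n. h i l) = (\<Sum>f\<in>{..<k} \<rightarrow>\<^sub>E {..<n}. \<Prod>i<k. h i (f i))"
    for h :: "nat \<Rightarrow> nat \<Rightarrow> real"
    by (rule prod_sum_PiE) auto
  have "detk k (\<lambda>i j. \<Sum>l<n. A i l * B l j) = (\<Sum>p | p permutes {..<k}.
      \<Sum>f\<in>{..<k} \<rightarrow>\<^sub>E {..<n}. (\<Prod>i<k. A i (f i)) * (of_int (sign p) * (\<Prod>i<k. B (f i) (p i))))"
    unfolding detk_def prod_sum by (simp add: sum_distrib_left prod.distrib mult_ac)
  also have "\<dots> = (\<Sum>f\<in>{..<k} \<rightarrow>\<^sub>E {..<n}.
      \<Sum>p | p permutes {..<k}. (\<Prod>i<k. A i (f i)) * (of_int (sign p) * (\<Prod>i<k. B (f i) (p i))))"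
    by (rule sum.swap)
  also have "\<dots> = (\<Sum>f\<in>{..<k} \<rightarrow>\<^sub>E {..<n}. ?g f)"
    unfolding detk_def by (simp add: sum_distrib_left)
  also have "\<dots> = (\<Sum>f | f \<in> {..<k} \<rightarrow>\<^sub>E {..<n} \<and> inj_on f {..<k}. ?g f)"
  proof (rule sum.mono_neutral_right)
    show "\<forall>f\<in>({..<k} \<rightarrow>\<^sub>E {..<n}) - {f. f \<in> {..<k} \<rightarrow>\<^sub>E {..<n} \<and> inj_on f {..<k}}. ?g f = 0"
    proof
      fix f assume "f \<in> ({..<k} \<rightarrow>\<^sub>E {..<n}) - {f. f \<in> {..<k} \<rightarrow>\<^sub>E {..<n} \<and> inj_on f {..<k}}"
      then obtain i j where "i < k" "j < k" "i \<noteq> j" "f i = f j"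
        unfolding inj_on_def by auto
      then show "?g f = 0" using detk_identical_rows[of i k j "\<lambda>i j. B (f i) j"] by simp
    qed
  qed (auto intro!: finite_PiE)
  finally show ?thesis .
qed

lemma detk_Cauchy_Binet:
  fixes n :: nat
  shows "detk k (\<lambda>i j. \<Sum>l<n. A i l * B l j) =
    (\<Sum>J | J \<subseteq> {..<n} \<and> card J = k. detk k (\<lambda>i j. A i (sl J ! j)) * detk k (\<lambda>i j. B (sl J ! i) j))"
proof -
  let ?g = "\<lambda>f. (\<Prod>i<k. A i (f i)) * detk k (\<lambda>i j. B (f i) j)"
  let ?Js = "{J. J \<subseteq> {..<n} \<and> card J = k}"
  have "detk k (\<lambda>i j. \<Sum>l<n. A i l * B l j) =
      (\<Sum>(J, \<tau>)\<in>(SIGMA J:?Js. {\<tau>. \<tau> permutes {..<k}}). ?g (restrict (\<lambda>i. sl J ! \<tau> i) {..<k}))"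
    using sum.reindex_bij_betw[OF bij_betw_subsets_permutations_injections[of "{..<n}" k], of ?g]
    by (simp add: detk_expand_rows split_def)
  also have "\<dots> = (\<Sum>J\<in>?Js. \<Sum>\<tau> | \<tau> permutes {..<k}. ?g (restrict (\<lambda>i. sl J ! \<tau> i) {..<k}))"
    by (rule sum.Sigma[symmetric]) (auto simp: finite_permutations)
  also have "\<dots> = (\<Sum>J\<in>?Js. \<Sum>\<tau> | \<tau> permutes {..<k}.
      of_int (sign \<tau>) * (\<Prod>i<k. A i (sl J ! \<tau> i)) * detk k (\<lambda>i j. B (sl J ! i) j))"
  proof (intro sum.cong refl)
    fix J \<tau> assume "\<tau> \<in> {\<tau>. \<tau> permutes {..<k}}"
    then have "detk k (\<lambda>i j. B (sl J ! \<tau> i) j) = of_int (sign \<tau>) * detk k (\<lambda>i j. B (sl J ! i) j)"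
      using detk_permute_rows[of \<tau> k "\<lambda>i j. B (sl J ! i) j"] by simp
    moreover have "detk k (\<lambda>i j. B (restrict (\<lambda>i. sl J ! \<tau> i) {..<k} i) j) = detk k (\<lambda>i j. B (sl J ! \<tau> i) j)"
      by (rule detk_cong) simp
    ultimately show "?g (restrict (\<lambda>i. sl J ! \<tau> i) {..<k}) =
        of_int (sign \<tau>) * (\<Prod>i<k. A i (sl J ! \<tau> i)) * detk k (\<lambda>i j. B (sl J ! i) j)"
      by simp
  qed
  also have "\<dots> = (\<Sum>J\<in>?Js. detk k (\<lambda>i j. A i (sl J ! j)) * detk k (\<lambda>i j. B (sl J ! i) j))"
    unfolding detk_def[of k "\<lambda>i j. A i (sl _ ! j)"] by (simp add: sum_distrib_right)
  finally show ?thesis .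
qed

lemma minor_Cauchy_Binet:
  assumes "card R = card C"
  shows "minor (\<lambda>i j. \<Sum>l<n. A i l * B l j) R C =
    (\<Sum>J | J \<subseteq> {..<n} \<and> card J = card C. minor A R J * minor B J C)"
  unfolding minor_def using detk_Cauchy_Binet[where k="card R" and A="\<lambda>i l. A (sl R ! i) l" and n=n and B="\<lambda>l j. B l (sl C ! j)"]
  by (simp add: assms)

lemma minor_monomial_matrix:
  assumes M: "\<And>i j. M i j = (if P i j then t ^ f i j else 0)"
  shows "minor M R C = (\<Sum>\<sigma> | \<sigma> permutes {..<card R}.
     (if \<forall>a<card R. P (sl R ! a) (sl C ! \<sigma> a) then of_int (sign \<sigma>) else 0) *
     t ^ (\<Sum>a<card R. f (sl R ! a) (sl C ! \<sigma> a)))"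
  unfolding minor_def detk_def
proof (intro sum.cong refl)
  fix \<sigma>
  show "of_int (sign \<sigma>) * (\<Prod>a<card R. M (sl R ! a) (sl C ! \<sigma> a)) =
    (if \<forall>a<card R. P (sl R ! a) (sl C ! \<sigma> a) then of_int (sign \<sigma>) else 0) *
     t ^ (\<Sum>a<card R. f (sl R ! a) (sl C ! \<sigma> a))"
  proof (cases "\<forall>a<card R. P (sl R ! a) (sl C ! \<sigma> a)")
    case True
    then show ?thesis by (simp add: M power_sum)
  next
    case False
    then obtain a where "a < card R" "\<not> P (sl R ! a) (sl C ! \<sigma> a)" by blast
    then have "(\<Prod>a<card R. M (sl R ! a) (sl C ! \<sigma> a)) = 0"
      by (intro prod_zero bexI[of _ a]) (simp_all add: M)
    then show ?thesis by (subst if_not_P[OF False]) simp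
  qed
qed

section \<open>Lower-triangular row operations and flags\<close>

definition matmul :: "nat \<Rightarrow> (nat \<Rightarrow> nat \<Rightarrow> real) \<Rightarrow> (nat \<Rightarrow> nat \<Rightarrow> real) \<Rightarrow> nat \<Rightarrow> nat \<Rightarrow> real" where
  "matmul n A B = (\<lambda>i j. \<Sum>l<n. A i l * B l j)"

definition lower_triangular :: "nat \<Rightarrow> (nat \<Rightarrow> nat \<Rightarrow> real) \<Rightarrow> bool" where
  "lower_triangular n K \<longleftrightarrow> (\<forall>i l. i < n \<longrightarrow> i < l \<longrightarrow> K i l = 0)"

lemma sum_mult_sum_swap:
  fixes c :: "nat \<Rightarrow> real"
  shows "(\<Sum>i<k. c i * (\<Sum>l<m. K i l * X l)) = (\<Sum>l<m. (\<Sum>i<k. c i * K i l) * X l)"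
  by (simp add: sum_distrib_left sum_distrib_right mult.assoc) (rule sum.swap)

lemma flag_minor_empty [simp]: "flag_minor M {} = 1"
  unfolding flag_minor_def minor_def by simp

lemma flag_minor_eq_detk: "flag_minor M I = detk (card I) (\<lambda>a b. M a (sl I ! b))"
  unfolding flag_minor_def minor_def card_lessThan by (rule detk_cong) (simp add: sl_lessThan_nth)

lemma flag_minor_lessThan: "flag_minor M {..<n} = detk n M"
  by (subst flag_minor_eq_detk) (auto intro!: detk_cong simp: sl_lessThan_nth)

lemma mem_flag_of:
  "k \<le> n \<Longrightarrow> v \<in> flag_of n M k \<longleftrightarrow> (\<exists>c. v = (\<lambda>j. \<Sum>i<k. c i * M i j))"
  unfolding flag_of_def by simp

lemma matmul_lower_triangular:
  assumes "lower_triangular n K" "a < k" "k \<le> n"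
  shows "matmul n K X a j = (\<Sum>l<k. K a l * X l j)"
  unfolding matmul_def
  by (rule sum.mono_neutral_right) (use assms in \<open>auto simp: lower_triangular_def\<close>)

lemma flag_minor_matmul_lower_triangular:
  assumes K: "lower_triangular n K" and I: "I \<subseteq> {..<n}"
  shows "flag_minor (matmul n K A) I = (\<Prod>a<card I. K a a) * flag_minor A I"
proof -
  have k: "card I \<le> n" using I by (rule card_le_if_subset_lessThan)
  have "flag_minor (matmul n K A) I = detk (card I) (\<lambda>a b. \<Sum>l<card I. K a l * A l (sl I ! b))"
    unfolding flag_minor_eq_detk by (rule detk_cong) (simp add: matmul_lower_triangular[OF K _ k])
  also have "\<dots> = detk (card I) K * flag_minor A I"
    by (simp add: detk_mult flag_minor_eq_detk)
  also have "detk (card I) K = (\<Prod>a<card I. K a a)"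
    by (rule detk_lower_triangular) (use K k in \<open>auto simp: lower_triangular_def\<close>)
  finally show ?thesis .
qed

lemma flag_of_matmul_lower_triangular_subset:
  assumes K: "lower_triangular n K" and k: "k \<le> n"
  shows "flag_of n (matmul n K X) k \<subseteq> flag_of n X k"
proof
  fix v assume "v \<in> flag_of n (matmul n K X) k"
  then obtain c where "v = (\<lambda>j. \<Sum>i<k. c i * matmul n K X i j)"
    using mem_flag_of[OF k] by auto
  also have "\<dots> = (\<lambda>j. \<Sum>i<k. c i * (\<Sum>l<k. K i l * X l j))"
    by (intro ext sum.cong refl) (simp add: matmul_lower_triangular[OF K _ k])
  also have "\<dots> = (\<lambda>j. \<Sum>l<k. (\<Sum>i<k. c i * K i l) * X l j)"
    by (simp only: sum_mult_sum_swap)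
  finally show "v \<in> flag_of n X k"
    unfolding mem_flag_of[OF k] by (rule exI[of _ "\<lambda>l. \<Sum>i<k. c i * K i l"])
qed

lemma flag_of_matmul_lower_triangular_supset:
  assumes K: "lower_triangular n K" and diag: "\<And>i. i < n \<Longrightarrow> K i i \<noteq> 0" and k: "k \<le> n"
  shows "flag_of n X k \<subseteq> flag_of n (matmul n K X) k"
proof
  have "detk k K = (\<Prod>a<k. K a a)"
    by (rule detk_lower_triangular) (use K k in \<open>auto simp: lower_triangular_def\<close>)
  also have "\<dots> \<noteq> 0" using diag k by simp
  finally obtain L where L: "\<And>i j. i < k \<Longrightarrow> j < k \<Longrightarrow> (\<Sum>l<k. L i l * K l j) = (if i = j then 1 else 0)"
    by (metis detk_nonzero_imp_inverse)
  have row: "X a j = (\<Sum>i<k. L a i * matmul n K X i j)" if a: "a < k" for a j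
  proof -
    have "(\<Sum>i<k. L a i * matmul n K X i j) = (\<Sum>i<k. L a i * (\<Sum>m<k. K i m * X m j))"
      by (intro sum.cong refl) (simp add: matmul_lower_triangular[OF K _ k])
    also have "\<dots> = (\<Sum>m<k. (\<Sum>i<k. L a i * K i m) * X m j)"
      by (simp only: sum_mult_sum_swap)
    also have "\<dots> = (\<Sum>m<k. if a = m then X m j else 0)"
      by (intro sum.cong refl) (simp add: L a)
    also have "\<dots> = X a j" using a by simp
    finally show ?thesis by simp
  qed
  fix v assume "v \<in> flag_of n X k"
  then obtain c where "v = (\<lambda>j. \<Sum>a<k. c a * X a j)"
    using mem_flag_of[OF k] by auto
  also have "\<dots> = (\<lambda>j. \<Sum>a<k. c a * (\<Sum>i<k. L a i * matmul n K X i j))"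
    by (intro ext sum.cong refl) (simp add: row)
  also have "\<dots> = (\<lambda>j. \<Sum>i<k. (\<Sum>a<k. c a * L a i) * matmul n K X i j)"
    by (simp only: sum_mult_sum_swap)
  finally show "v \<in> flag_of n (matmul n K X) k"
    unfolding mem_flag_of[OF k] by (rule exI[of _ "\<lambda>i. \<Sum>a<k. c a * L a i"])
qed

lemma flag_of_matmul_lower_triangular:
  assumes "lower_triangular n K" "\<And>i. i < n \<Longrightarrow> K i i \<noteq> 0"
  shows "flag_of n (matmul n K X) = flag_of n X"
proof
  fix k show "flag_of n (matmul n K X) k = flag_of n X k"
    using flag_of_matmul_lower_triangular_subset[OF assms(1)]
      flag_of_matmul_lower_triangular_supset[OF assms]
    by (cases "k \<le> n") (simp_all add: subset_antisym flag_of_def)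
qed

lemma flag_of_eq_imp_matmul_lower_triangular:
  assumes M: "M \<in> sqmats n" and eq: "flag_of n M = flag_of n A"
  obtains K where "lower_triangular n K" "M = matmul n K A"
proof -
  have "\<exists>c. (\<lambda>j. M i j) = (\<lambda>j. \<Sum>l<Suc i. c l * A l j)" if i: "i < n" for i
  proof -
    have "(\<lambda>j. M i j) \<in> flag_of n M (Suc i)"
      unfolding mem_flag_of[OF Suc_leI[OF i]]
      by (rule exI[of _ "\<lambda>l. if l = i then 1 else 0"]) (simp add: if_distrib cong: if_cong)
    then show ?thesis using eq i by (simp add: mem_flag_of)
  qed
  then obtain c where c: "\<And>i. i < n \<Longrightarrow> (\<lambda>j. M i j) = (\<lambda>j. \<Sum>l<Suc i. c i l * A l j)"
    by metis
  define K where "K i l = (if i < n \<and> l \<le> i then c i l else 0)" for i l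
  have "M i j = matmul n K A i j" for i j
  proof (cases "i < n")
    case True
    have "matmul n K A i j = (\<Sum>l<Suc i. K i l * A l j)"
      unfolding matmul_def by (rule sum.mono_neutral_right) (use True in \<open>auto simp: K_def\<close>)
    also have "\<dots> = M i j" using fun_cong[OF c[OF True], of j] True by (simp add: K_def)
    finally show ?thesis by simp
  next
    case False
    then show ?thesis using M by (simp add: sqmats_def matmul_def K_def)
  qed
  moreover have "lower_triangular n K" unfolding lower_triangular_def K_def by auto
  ultimately show ?thesis using that by blast
qed

lemma matmul_in_sqmats: "A \<in> sqmats n \<Longrightarrow> B \<in> sqmats n \<Longrightarrow> matmul n A B \<in> sqmats n"
  unfolding sqmats_def matmul_def by auto

lemma GLn_if_flag_minor_lessThan_pos:
  "A \<in> sqmats n \<Longrightarrow> 0 < flag_minor A {..<n} \<Longrightarrow> A \<in> GLn n"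
  by (simp add: GLn_def flag_minor_lessThan)

lemma exists_flag_minor_nonzero:
  assumes M: "M \<in> GLn n" and k: "k \<le> n"
  shows "\<exists>J\<subseteq>{..<n}. card J = k \<and> flag_minor M J \<noteq> 0"
proof (rule ccontr)
  assume zero: "\<not> ?thesis"
  have "detk n M \<noteq> 0" using M by (simp add: GLn_def)
  then obtain N where N: "\<And>i j. i < n \<Longrightarrow> j < n \<Longrightarrow> (\<Sum>l<n. M i l * N l j) = (if i = j then 1 else 0)"
    by (metis detk_nonzero_imp_inverse)
  have "1 = detk k (\<lambda>a b. if a = b then 1 else 0 :: real)"
    by (subst detk_lower_triangular) auto
  also have "\<dots> = minor (\<lambda>i j. \<Sum>l<n. M i l * N l j) {..<k} {..<k}"
    unfolding minor_def card_lessThan by (intro detk_cong) (use k in \<open>simp add: N sl_lessThan_nth\<close>)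
  also have "\<dots> = (\<Sum>J | J \<subseteq> {..<n} \<and> card J = k. minor M {..<k} J * minor N J {..<k})"
    by (simp add: minor_Cauchy_Binet)
  also have "\<dots> = (\<Sum>J | J \<subseteq> {..<n} \<and> card J = k. flag_minor M J * minor N J {..<k})"
    unfolding flag_minor_def by (intro sum.cong refl) auto
  also have "\<dots> = 0"
  proof (intro sum.neutral ballI)
    fix J assume "J \<in> {J. J \<subseteq> {..<n} \<and> card J = k}"
    then have "flag_minor M J = 0" using zero by simp
    then show "flag_minor M J * minor N J {..<k} = 0" by simp
  qed
  finally show False by simp
qed

section \<open>Sign-coherent flag minors\<close>

definition flag_minors_sign_coherent :: "nat \<Rightarrow> (nat \<Rightarrow> nat \<Rightarrow> real) \<Rightarrow> bool" where
  "flag_minors_sign_coherent n A \<longleftrightarrow> (\<forall>k\<le>n.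
     (\<forall>I\<subseteq>{..<n}. card I = k \<longrightarrow> 0 \<le> flag_minor A I) \<or>
     (\<forall>I\<subseteq>{..<n}. card I = k \<longrightarrow> flag_minor A I \<le> 0))"

definition Fl_Pluecker_nonneg :: "nat \<Rightarrow> (nat \<Rightarrow> (nat \<Rightarrow> real) set) set" where
  "Fl_Pluecker_nonneg n =
     {F \<in> Fl n. \<exists>M \<in> GLn n. flag_of n M = F \<and> (\<forall>I \<subseteq> {..<n}. flag_minor M I \<ge> 0)}"

lemma flag_minors_sign_coherent_if_nonneg_representative:
  assumes M: "M \<in> GLn n" and eq: "flag_of n M = flag_of n A"
    and nonneg: "\<forall>I\<subseteq>{..<n}. 0 \<le> flag_minor M I"
  shows "flag_minors_sign_coherent n A"
  unfolding flag_minors_sign_coherent_def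
proof (intro allI impI)
  fix k assume k: "k \<le> n"
  have "M \<in> sqmats n" using M by (simp add: GLn_def)
  then obtain K where K: "lower_triangular n K" "M = matmul n K A"
    using flag_of_eq_imp_matmul_lower_triangular[OF _ eq] by blast
  have minor: "flag_minor M I = (\<Prod>a<card I. K a a) * flag_minor A I" if "I \<subseteq> {..<n}" for I
    unfolding K(2) by (rule flag_minor_matmul_lower_triangular[OF K(1) that])
  have "(\<Prod>a<n. K a a) \<noteq> 0"
    using M minor[of "{..<n}"] by (auto simp: GLn_def flag_minor_lessThan)
  then have nonzero: "(\<Prod>a<k. K a a) \<noteq> 0"
    using k by (auto simp: prod_zero_iff)
  show "(\<forall>I\<subseteq>{..<n}. card I = k \<longrightarrow> 0 \<le> flag_minor A I) \<or>
      (\<forall>I\<subseteq>{..<n}. card I = k \<longrightarrow> flag_minor A I \<le> 0)"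
  proof (cases "(\<Prod>a<k. K a a) > 0")
    case True
    have "0 \<le> flag_minor A I" if "I \<subseteq> {..<n}" "card I = k" for I
    proof -
      have "0 \<le> (\<Prod>a<k. K a a) * flag_minor A I" using nonneg that minor[OF that(1)] by auto
      then show ?thesis using True by (simp add: zero_le_mult_iff)
    qed
    then show ?thesis by blast
  next
    case False
    with nonzero have "(\<Prod>a<k. K a a) < 0" by linarith
    have "flag_minor A I \<le> 0" if "I \<subseteq> {..<n}" "card I = k" for I
    proof -
      have "0 \<le> (\<Prod>a<k. K a a) * flag_minor A I" using nonneg that minor[OF that(1)] by auto
      then show ?thesis using \<open>(\<Prod>a<k. K a a) < 0\<close> by (simp add: zero_le_mult_iff)
    qed
    then show ?thesis by blast
  qed
qed

lemma exists_nonneg_representative: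
  assumes A: "A \<in> GLn n" and coherent: "flag_minors_sign_coherent n A"
  shows "\<exists>M\<in>GLn n. flag_of n M = flag_of n A \<and> (\<forall>I\<subseteq>{..<n}. 0 \<le> flag_minor M I)"
proof -
  define s :: "nat \<Rightarrow> real" where
    "s k = (if \<forall>I\<subseteq>{..<n}. card I = k \<longrightarrow> 0 \<le> flag_minor A I then 1 else -1)" for k
  define D where "D i l = (if i = l \<and> i < n then s (Suc i) * s i else 0)" for i l
  define M where "M = matmul n D A"
  have s_sq: "s k * s k = 1" and s_nonzero: "s k \<noteq> 0" for k by (simp_all add: s_def)
  have "s 0 = 1" by (auto simp: s_def card_eq_0_iff finite_subset)
  then have prod_D: "(\<Prod>a<k. D a a) = s k" if "k \<le> n" for k
    using that by (induction k) (auto simp: D_def mult_ac s_sq)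
  have D: "lower_triangular n D" "\<And>i. i < n \<Longrightarrow> D i i \<noteq> 0"
    by (auto simp: lower_triangular_def D_def s_nonzero)
  have minor: "flag_minor M I = s (card I) * flag_minor A I" if "I \<subseteq> {..<n}" for I
    using flag_minor_matmul_lower_triangular[OF D(1) that] prod_D card_le_if_subset_lessThan[OF that]
    by (simp add: M_def)
  have "0 \<le> flag_minor M I" if I: "I \<subseteq> {..<n}" for I
    using coherent card_le_if_subset_lessThan[OF I] I
    unfolding minor[OF I] flag_minors_sign_coherent_def s_def by (auto simp: mult_le_0_iff)
  moreover have "M \<in> GLn n"
  proof -
    have "M \<in> sqmats n"
      using A by (auto simp: sqmats_def GLn_def M_def matmul_def D_def)
    moreover have "detk n M \<noteq> 0"
      using A minor[of "{..<n}"] s_sq[of n] by (auto simp: flag_minor_lessThan GLn_def)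
    ultimately show ?thesis by (simp add: GLn_def)
  qed
  moreover have "flag_of n M = flag_of n A"
    unfolding M_def by (rule flag_of_matmul_lower_triangular[OF D])
  ultimately show ?thesis by blast
qed

lemma flag_of_in_Fl_Pluecker_nonneg_iff:
  assumes A: "A \<in> GLn n"
  shows "flag_of n A \<in> Fl_Pluecker_nonneg n \<longleftrightarrow> flag_minors_sign_coherent n A"
proof
  assume "flag_of n A \<in> Fl_Pluecker_nonneg n"
  then obtain M where "M \<in> GLn n" "flag_of n M = flag_of n A" "\<forall>I\<subseteq>{..<n}. 0 \<le> flag_minor M I"
    unfolding Fl_Pluecker_nonneg_def by auto
  then show "flag_minors_sign_coherent n A"
    by (rule flag_minors_sign_coherent_if_nonneg_representative)
next
  assume "flag_minors_sign_coherent n A"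
  then show "flag_of n A \<in> Fl_Pluecker_nonneg n"
    using exists_nonneg_representative[OF A] A unfolding Fl_Pluecker_nonneg_def Fl_def by auto
qed

lemma continuous_on_flag_minor: "continuous_on UNIV (\<lambda>M. flag_minor M I)"
proof -
  have entry: "continuous_on UNIV (\<lambda>M :: nat \<Rightarrow> nat \<Rightarrow> real. M i j)" for i j
    by (rule continuous_on_product_then_coordinatewise) simp
  show ?thesis
    unfolding flag_minor_eq_detk detk_def by (intro continuous_intros entry)
qed

lemma closed_flag_minors_sign_coherent: "closed {A. flag_minors_sign_coherent n A}"
proof -
  have "{A. flag_minors_sign_coherent n A} = (\<Inter>k\<in>{..n}.
      (\<Inter>I\<in>{I. I \<subseteq> {..<n} \<and> card I = k}. {A. 0 \<le> flag_minor A I}) \<union>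
      (\<Inter>I\<in>{I. I \<subseteq> {..<n} \<and> card I = k}. {A. flag_minor A I \<le> 0}))"
    unfolding flag_minors_sign_coherent_def by auto
  also have "closed \<dots>"
    by (intro closed_INT ballI closed_Un closed_Collect_le continuous_on_flag_minor continuous_on_const)
  finally show ?thesis .
qed

lemma totally_positive_imp_flag_minor_pos:
  assumes A: "totally_positive n A" and I: "I \<subseteq> {..<n}"
  shows "0 < flag_minor A I"
proof (cases "I = {}")
  case False
  then have "card I \<noteq> 0" using finite_subset[OF I] by simp
  then have "{..<card I} \<subseteq> {..<n}" "{..<card I} \<noteq> {}" "card {..<card I} = card I"
    using card_le_if_subset_lessThan[OF I] by auto
  then show ?thesis
    using A I unfolding totally_positive_def flag_minor_def by blast
qed simp

lemma Fl_pos_subset_Fl_Pluecker_nonneg: "Fl_pos n \<subseteq> Fl_Pluecker_nonneg n"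
proof
  fix F assume "F \<in> Fl_pos n"
  then obtain A where A: "A \<in> GLn n" "totally_positive n A" "F = flag_of n A"
    unfolding Fl_pos_def by auto
  then have "\<forall>I\<subseteq>{..<n}. 0 \<le> flag_minor A I"
    using totally_positive_imp_flag_minor_pos less_imp_le by blast
  then show "F \<in> Fl_Pluecker_nonneg n"
    using A unfolding Fl_Pluecker_nonneg_def Fl_def by auto
qed

section \<open>Lowest-order terms and the rearrangement inequality\<close>

lemma eventually_sum_powers_pos:
  fixes c :: "'a \<Rightarrow> real" and e :: "'a \<Rightarrow> nat"
  assumes fin: "finite S" and ge: "\<And>x. x \<in> S \<Longrightarrow> c x \<noteq> 0 \<Longrightarrow> e0 \<le> e x"
    and pos: "0 < (\<Sum>x | x \<in> S \<and> e x = e0. c x)"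
  shows "\<forall>\<^sub>F t in at_right 0. 0 < (\<Sum>x\<in>S. c x * t ^ e x)"
proof -
  define f where "f t = (\<Sum>x\<in>S. c x * t ^ (e x - e0))" for t :: real
  have "f 0 = (\<Sum>x\<in>S. if e x = e0 then c x else 0)"
    unfolding f_def by (intro sum.cong refl) (use ge in \<open>force simp: power_0_left\<close>)
  also have "\<dots> = (\<Sum>x | x \<in> S \<and> e x = e0. c x)"
    using fin by (simp add: sum.inter_filter)
  finally have "0 < f 0" using pos by simp
  moreover have "(f \<longlongrightarrow> f 0) (at_right 0)"
    unfolding f_def by (intro tendsto_intros)
  ultimately have "\<forall>\<^sub>F t in at_right 0. 0 < f t"
    by (rule order_tendstoD(1)[rotated])
  moreover have "\<forall>\<^sub>F t in at_right 0. (0::real) < t"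
    by (rule eventually_at_right_less)
  ultimately show ?thesis
  proof eventually_elim
    case (elim t)
    have "(\<Sum>x\<in>S. c x * t ^ e x) = t ^ e0 * f t"
      unfolding f_def sum_distrib_left
    proof (intro sum.cong refl)
      fix x assume "x \<in> S"
      then show "c x * t ^ e x = t ^ e0 * (c x * t ^ (e x - e0))"
        using ge[of x] by (cases "c x = 0") (simp_all flip: power_add)
    qed
    then show ?case using elim by simp
  qed
qed

lemma eventually_sum_powers_pos_lowest_order:
  fixes c :: "'a \<Rightarrow> real" and e :: "'a \<Rightarrow> nat"
  assumes fin: "finite S" and nonzero: "x0 \<in> S" "c x0 \<noteq> 0"
    and lowest: "\<And>x. x \<in> S \<Longrightarrow> c x \<noteq> 0 \<Longrightarrow> (\<And>y. y \<in> S \<Longrightarrow> c y \<noteq> 0 \<Longrightarrow> e x \<le> e y) \<Longrightarrow> 0 < c x"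
  shows "\<forall>\<^sub>F t in at_right 0. 0 < (\<Sum>x\<in>S. c x * t ^ e x)"
proof -
  let ?S' = "{x \<in> S. c x \<noteq> 0}"
  define e0 where "e0 = Min (e ` ?S')"
  have min: "e0 \<le> e x" if "x \<in> S" "c x \<noteq> 0" for x
    unfolding e0_def using fin that by (intro Min_le) auto
  have "e0 \<in> e ` ?S'"
    unfolding e0_def using fin nonzero by (intro Min_in) auto
  then obtain x1 where x1: "x1 \<in> S" "c x1 \<noteq> 0" "e x1 = e0"
    by auto
  have "0 < (\<Sum>x | x \<in> S \<and> e x = e0. c x)"
  proof (rule sum_pos2)
    show "finite {x. x \<in> S \<and> e x = e0}" using fin by simp
    show "x1 \<in> {x. x \<in> S \<and> e x = e0}"
      using x1 by simp
    show "0 < c x1"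
      by (rule lowest[OF x1(1,2)]) (use min x1(3) in simp)
    show "0 \<le> c x" if x: "x \<in> {x. x \<in> S \<and> e x = e0}" for x
    proof (cases "c x = 0")
      case False
      have "0 < c x"
        by (rule lowest) (use x False min in simp_all)
      then show ?thesis by simp
    qed simp
  qed
  with fin min show ?thesis
    by (rule eventually_sum_powers_pos)
qed

lemma rearrangement_exchange:
  fixes x y :: "nat \<Rightarrow> real"
  assumes x: "\<And>a b. a < b \<Longrightarrow> b < Suc k \<Longrightarrow> x a < x b"
    and y: "\<And>a b. a < b \<Longrightarrow> b < Suc k \<Longrightarrow> y a < y b"
    and \<sigma>: "\<sigma> permutes {..<Suc k}" "\<sigma> k \<noteq> k"
  obtains \<rho> where "\<rho> permutes {..<Suc k}" "\<rho> k = k"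
    "(\<Sum>a<Suc k. x a * y (\<sigma> a)) < (\<Sum>a<Suc k. x a * y (\<rho> a))"
proof -
  define c where "c = Hilbert_Choice.inv \<sigma> k"
  define \<rho> where "\<rho> = \<sigma> \<circ> Transposition.transpose c k"
  have \<sigma>k: "\<sigma> k < Suc k"
    using permutes_in_image[OF \<sigma>(1), of k] by simp
  have c: "\<sigma> c = k" "c < Suc k" "c \<noteq> k"
    using permutes_inverses(1)[OF \<sigma>(1)] permutes_in_image[OF permutes_inv[OF \<sigma>(1)], of k] \<sigma>(2)
    by (auto simp: c_def) (metis permutes_inverses(1)[OF \<sigma>(1)])
  have \<rho>_perm: "\<rho> permutes {..<Suc k}"
    unfolding \<rho>_def using c(2) by (intro permutes_compose[OF permutes_swap_id \<sigma>(1)]) auto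
  have \<rho>: "\<rho> k = k" "\<rho> c = \<sigma> k" "\<And>a. a \<noteq> c \<Longrightarrow> a \<noteq> k \<Longrightarrow> \<rho> a = \<sigma> a"
    unfolding \<rho>_def using c by auto
  have "(\<Sum>a<Suc k. x a * y (\<sigma> a)) - (\<Sum>a<Suc k. x a * y (\<rho> a))
      = (\<Sum>a\<in>{c, k}. x a * y (\<sigma> a) - x a * y (\<rho> a))"
    unfolding sum_subtractf[symmetric]
    by (rule sum.mono_neutral_right) (use c \<rho>(3) in auto)
  also have "\<dots> = - ((x k - x c) * (y k - y (\<sigma> k)))"
    using c \<rho> by (simp add: algebra_simps)
  also have "\<dots> < 0"
    using x[of c k] y[of "\<sigma> k" k] c \<sigma>k \<sigma>(2) by simp
  finally show ?thesis
    using that[OF \<rho>_perm \<rho>(1)] by simp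
qed

lemma rearrangement_strict:
  fixes x y :: "nat \<Rightarrow> real"
  assumes "\<And>a b. a < b \<Longrightarrow> b < k \<Longrightarrow> x a < x b"
    and "\<And>a b. a < b \<Longrightarrow> b < k \<Longrightarrow> y a < y b"
    and "\<sigma> permutes {..<k}" "\<sigma> \<noteq> id"
  shows "(\<Sum>a<k. x a * y (\<sigma> a)) < (\<Sum>a<k. x a * y a)"
  using assms
proof (induction k arbitrary: \<sigma>)
  case 0
  then show ?case by (simp add: permutes_empty)
next
  case (Suc k)
  have le: "(\<Sum>a<Suc k. x a * y (\<rho> a)) \<le> (\<Sum>a<Suc k. x a * y a)"
    if \<rho>: "\<rho> permutes {..<Suc k}" "\<rho> k = k" for \<rho>
  proof -
    have \<rho>k: "\<rho> permutes {..<k}"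
      using \<rho> unfolding permutes_def by (metis lessThan_iff less_Suc_eq)
    have "(\<Sum>a<k. x a * y (\<rho> a)) \<le> (\<Sum>a<k. x a * y a)"
    proof (cases "\<rho> = id")
      case False
      have "(\<Sum>a<k. x a * y (\<rho> a)) < (\<Sum>a<k. x a * y a)"
        by (rule Suc.IH) (use Suc.prems \<rho>k False in auto)
      then show ?thesis by simp
    qed simp
    then show ?thesis using \<rho>(2) by simp
  qed
  show ?case
  proof (cases "\<sigma> k = k")
    case True
    have "\<sigma> permutes {..<k}"
      using Suc.prems(3) True unfolding permutes_def by (metis lessThan_iff less_Suc_eq)
    then have "(\<Sum>a<k. x a * y (\<sigma> a)) < (\<Sum>a<k. x a * y a)"
      by (rule Suc.IH[rotated 2]) (use Suc.prems in auto)
    then show ?thesis using True by simp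
  next
    case False
    then obtain \<rho> where "\<rho> permutes {..<Suc k}" "\<rho> k = k"
        "(\<Sum>a<Suc k. x a * y (\<sigma> a)) < (\<Sum>a<Suc k. x a * y (\<rho> a))"
      using rearrangement_exchange[of k x y \<sigma>, OF Suc.prems(1-3) False] by blast
    then show ?thesis using le by fastforce
  qed
qed

definition sqdist :: "nat \<Rightarrow> nat \<Rightarrow> nat" where
  "sqdist i j = (if i \<le> j then j - i else i - j)\<^sup>2"

lemma of_nat_sqdist: "real (sqdist i j) = (real i - real j)\<^sup>2"
  unfolding sqdist_def by (auto simp: of_nat_diff power2_commute)

lemma sqdist_eq_0_iff [simp]: "sqdist i j = 0 \<longleftrightarrow> i = j"
  unfolding sqdist_def by auto

lemma sqdist_le: "i < n \<Longrightarrow> j < n \<Longrightarrow> sqdist i j \<le> n\<^sup>2"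
  unfolding sqdist_def by (auto intro!: power_mono)

lemma sum_sqdist_permute_less:
  fixes x y :: "nat \<Rightarrow> nat"
  assumes "\<And>a b. a < b \<Longrightarrow> b < k \<Longrightarrow> x a < x b" "\<And>a b. a < b \<Longrightarrow> b < k \<Longrightarrow> y a < y b"
    and \<sigma>: "\<sigma> permutes {..<k}" "\<sigma> \<noteq> id"
  shows "(\<Sum>a<k. sqdist (x a) (y a)) < (\<Sum>a<k. sqdist (x a) (y (\<sigma> a)))"
proof -
  have expand: "real (\<Sum>a<k. sqdist (x a) (y (\<rho> a))) = (\<Sum>a<k. (real (x a))\<^sup>2)
      + (\<Sum>a<k. (real (y (\<rho> a)))\<^sup>2) - 2 * (\<Sum>a<k. real (x a) * real (y (\<rho> a)))" for \<rho>
    by (simp add: of_nat_sqdist power2_diff sum.distrib sum_subtractf sum_distrib_left mult.assoc)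
  have "(\<Sum>a<k. (real (y (\<sigma> a)))\<^sup>2) = (\<Sum>a<k. (real (y a))\<^sup>2)"
    using sum.permute[OF \<sigma>(1), of "\<lambda>a. (real (y a))\<^sup>2"] by (simp add: comp_def)
  moreover have "(\<Sum>a<k. real (x a) * real (y (\<sigma> a))) < (\<Sum>a<k. real (x a) * real (y a))"
    by (rule rearrangement_strict) (use assms in auto)
  ultimately have "real (\<Sum>a<k. sqdist (x a) (y a)) < real (\<Sum>a<k. sqdist (x a) (y (\<sigma> a)))"
    using expand[of \<sigma>] expand[of id] by simp
  then show ?thesis by linarith
qed

section \<open>Positive flag minors by a Gaussian perturbation\<close>

definition gauss_kernel :: "nat \<Rightarrow> real \<Rightarrow> nat \<Rightarrow> nat \<Rightarrow> real" where
  "gauss_kernel n t i j = (if i < n \<and> j < n then t ^ sqdist i j else 0)"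

lemma flag_minor_matmul_gauss_kernel:
  assumes C: "C \<subseteq> {..<n}"
  shows "flag_minor (matmul n M (gauss_kernel n t)) C =
    (\<Sum>J | J \<subseteq> {..<n} \<and> card J = card C. \<Sum>\<sigma> | \<sigma> permutes {..<card C}.
       flag_minor M J * of_int (sign \<sigma>) * t ^ (\<Sum>a<card C. sqdist (sl J ! a) (sl C ! \<sigma> a)))"
proof -
  have "flag_minor (matmul n M (gauss_kernel n t)) C =
      (\<Sum>J | J \<subseteq> {..<n} \<and> card J = card C. minor M {..<card C} J * minor (gauss_kernel n t) J C)"
    unfolding flag_minor_def matmul_def by (simp add: minor_Cauchy_Binet)
  also have "\<dots> = (\<Sum>J | J \<subseteq> {..<n} \<and> card J = card C. \<Sum>\<sigma> | \<sigma> permutes {..<card C}.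
       flag_minor M J * of_int (sign \<sigma>) * t ^ (\<Sum>a<card C. sqdist (sl J ! a) (sl C ! \<sigma> a)))"
  proof (intro sum.cong refl)
    fix J assume J: "J \<in> {J. J \<subseteq> {..<n} \<and> card J = card C}"
    have "minor (gauss_kernel n t) J C = (\<Sum>\<sigma> | \<sigma> permutes {..<card C}.
        of_int (sign \<sigma>) * t ^ (\<Sum>a<card C. sqdist (sl J ! a) (sl C ! \<sigma> a)))"
    proof -
      have "sl J ! a < n \<and> sl C ! \<sigma> a < n" if "\<sigma> permutes {..<card C}" "a < card C" for \<sigma> a
        using J C sl_nth_mem[of J a] sl_nth_mem[of C "\<sigma> a"] permutes_in_image[OF that(1), of a] that(2)
          finite_subset by auto
      then show ?thesis
        using J by (simp add: minor_monomial_matrix[OF gauss_kernel_def])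
    qed
    then show "minor M {..<card C} J * minor (gauss_kernel n t) J C = (\<Sum>\<sigma> | \<sigma> permutes {..<card C}.
       flag_minor M J * of_int (sign \<sigma>) * t ^ (\<Sum>a<card C. sqdist (sl J ! a) (sl C ! \<sigma> a)))"
      using J by (simp add: flag_minor_def sum_distrib_left mult.assoc)
  qed
  finally show ?thesis .
qed

lemma gauss_kernel_in_sqmats: "gauss_kernel n t \<in> sqmats n"
  unfolding sqmats_def gauss_kernel_def by auto

lemma eventually_flag_minor_matmul_gauss_kernel_pos:
  assumes M: "M \<in> GLn n" and nonneg: "\<forall>I\<subseteq>{..<n}. 0 \<le> flag_minor M I" and C: "C \<subseteq> {..<n}"
  shows "\<forall>\<^sub>F t in at_right 0. 0 < flag_minor (matmul n M (gauss_kernel n t)) C"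
proof -
  define k where "k = card C"
  define P where "P = {J. J \<subseteq> {..<n} \<and> card J = k} \<times> {\<sigma>. \<sigma> permutes {..<k}}"
  define c where "c = (\<lambda>(J, \<sigma> :: nat \<Rightarrow> nat). flag_minor M J * of_int (sign \<sigma>))"
  define e where "e = (\<lambda>(J, \<sigma>). \<Sum>a<k. sqdist (sl J ! a) (sl C ! \<sigma> a))"
  have expand: "flag_minor (matmul n M (gauss_kernel n t)) C = (\<Sum>x\<in>P. c x * t ^ e x)" for t
    unfolding flag_minor_matmul_gauss_kernel[OF C] P_def c_def e_def k_def
    by (simp add: sum.cartesian_product split_def)
  have fin: "finite P"
    unfolding P_def by (auto intro: finite_subset[of _ "Pow {..<n}"] simp: finite_permutations)
  have e_id_less: "e (J, id) < e (J, \<sigma>)" if "(J, \<sigma>) \<in> P" "\<sigma> \<noteq> id" for J \<sigma>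
  proof -
    have "finite J" "card J = k" "\<sigma> permutes {..<k}" "finite C"
      using that C finite_subset unfolding P_def k_def by auto
    then have "(\<Sum>a<k. sqdist (sl J ! a) (sl C ! a)) < (\<Sum>a<k. sqdist (sl J ! a) (sl C ! \<sigma> a))"
      using that(2) k_def by (intro sum_sqdist_permute_less) (auto intro: sl_nth_strict_mono)
    then show ?thesis by (simp add: e_def)
  qed
  obtain J0 where J0: "J0 \<subseteq> {..<n}" "card J0 = k" "flag_minor M J0 \<noteq> 0"
    using exists_flag_minor_nonzero[OF M, of k] C card_le_if_subset_lessThan unfolding k_def by blast
  show ?thesis
    unfolding expand
  proof (rule eventually_sum_powers_pos_lowest_order[OF fin])
    show "(J0, id) \<in> P" "c (J0, id) \<noteq> 0"
      using J0 by (simp_all add: P_def c_def permutes_id)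
    fix x assume x: "x \<in> P" "c x \<noteq> 0" and lowest: "\<And>y. y \<in> P \<Longrightarrow> c y \<noteq> 0 \<Longrightarrow> e x \<le> e y"
    obtain J \<sigma> where J\<sigma>: "x = (J, \<sigma>)" by (cases x)
    have J: "(J, id) \<in> P" "flag_minor M J \<noteq> 0"
      using x J\<sigma> by (auto simp: P_def c_def permutes_id)
    have "\<sigma> = id"
      using e_id_less[of J \<sigma>] lowest[of "(J, id)"] J x J\<sigma> by (force simp: c_def)
    then show "0 < c x"
      using J nonneg x J\<sigma> by (auto simp: P_def c_def order_less_le)
  qed
qed

lemma tendsto_matmul_gauss_kernel:
  assumes "M \<in> sqmats n"
  shows "((\<lambda>t. matmul n M (gauss_kernel n t)) \<longlongrightarrow> M) (at_right 0)"
proof -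
  have "matmul n M (gauss_kernel n 0) = M"
  proof (intro ext)
    fix i j
    have "matmul n M (gauss_kernel n 0) i j = (\<Sum>l<n. if l = j then (if j < n then M i l else 0) else 0)"
      unfolding matmul_def gauss_kernel_def by (intro sum.cong refl) (auto simp: power_0_left)
    also have "\<dots> = M i j" using assms by (simp add: sqmats_def)
    finally show "matmul n M (gauss_kernel n 0) i j = M i j" .
  qed
  moreover have "continuous_on UNIV (\<lambda>t. gauss_kernel n t i j)" for i j
    unfolding gauss_kernel_def
    by (cases "i < n \<and> j < n") (simp_all only: if_P if_not_P if_True if_False continuous_intros)
  then have "continuous_on UNIV (\<lambda>t. matmul n M (gauss_kernel n t))"
    unfolding matmul_def by (intro continuous_on_coordinatewise_then_product continuous_intros)
  ultimately have "((\<lambda>t. matmul n M (gauss_kernel n t)) \<longlongrightarrow> M) (at 0 within UNIV)"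
    unfolding continuous_on_def by (metis UNIV_I)
  then show ?thesis
    by (rule tendsto_within_subset) simp
qed

lemma exists_flag_minors_pos_near:
  assumes M: "M \<in> GLn n" and nonneg: "\<forall>I\<subseteq>{..<n}. 0 \<le> flag_minor M I"
    and U: "open U" "M \<in> U"
  shows "\<exists>X\<in>U \<inter> GLn n. \<forall>I\<subseteq>{..<n}. 0 < flag_minor X I"
proof -
  have "M \<in> sqmats n" using M by (simp add: GLn_def)
  then have "\<forall>\<^sub>F t in at_right 0. matmul n M (gauss_kernel n t) \<in> U"
    using U by (intro topological_tendstoD[OF tendsto_matmul_gauss_kernel])
  moreover have "\<forall>\<^sub>F t in at_right 0. \<forall>I\<in>Pow {..<n}. 0 < flag_minor (matmul n M (gauss_kernel n t)) I"
    by (rule eventually_ball_finite) (use eventually_flag_minor_matmul_gauss_kernel_pos[OF M nonneg] in auto)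
  ultimately have "\<exists>t. matmul n M (gauss_kernel n t) \<in> U \<and>
      (\<forall>I\<in>Pow {..<n}. 0 < flag_minor (matmul n M (gauss_kernel n t)) I)"
    by (intro eventually_happens'[OF _ eventually_conj]) auto
  then obtain t where t: "matmul n M (gauss_kernel n t) \<in> U"
      "\<forall>I\<in>Pow {..<n}. 0 < flag_minor (matmul n M (gauss_kernel n t)) I"
    by blast
  moreover have "matmul n M (gauss_kernel n t) \<in> GLn n"
    using \<open>M \<in> sqmats n\<close> t(2)
    by (intro GLn_if_flag_minor_lessThan_pos matmul_in_sqmats gauss_kernel_in_sqmats) simp_all
  ultimately show ?thesis using t(2) by auto
qed

section \<open>Total positivity by a lower-triangular factor\<close>

text \<open>The weight \<open>n\<^sup>3 + 1\<close> exceeds any sum of at most \<open>n\<close> values \<open>sqdist i j\<close> with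
  \<open>i, j < n\<close>, so the column weights decide the lowest-order term first.\<close>

definition lower_kernel :: "nat \<Rightarrow> real \<Rightarrow> nat \<Rightarrow> nat \<Rightarrow> real" where
  "lower_kernel n t i j = (if j \<le> i \<and> i < n then t ^ ((n ^ 3 + 1) * j + sqdist i j) else 0)"

lemma minor_matmul_lower_kernel:
  assumes R: "R \<subseteq> {..<n}" and RC: "card R = card C"
  shows "minor (matmul n (lower_kernel n t) X) R C =
    (\<Sum>J | J \<subseteq> {..<n} \<and> card J = card C. \<Sum>\<sigma> | \<sigma> permutes {..<card C}.
      (if \<forall>a<card C. sl J ! \<sigma> a \<le> sl R ! a then of_int (sign \<sigma>) else 0) * minor X J C *
      t ^ (\<Sum>a<card C. (n ^ 3 + 1) * sl J ! \<sigma> a + sqdist (sl R ! a) (sl J ! \<sigma> a)))"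
proof -
  have "minor (matmul n (lower_kernel n t) X) R C =
      (\<Sum>J | J \<subseteq> {..<n} \<and> card J = card C. minor (lower_kernel n t) R J * minor X J C)"
    unfolding matmul_def using RC by (rule minor_Cauchy_Binet)
  also have "\<dots> = (\<Sum>J | J \<subseteq> {..<n} \<and> card J = card C. \<Sum>\<sigma> | \<sigma> permutes {..<card C}.
      (if \<forall>a<card C. sl J ! \<sigma> a \<le> sl R ! a then of_int (sign \<sigma>) else 0) * minor X J C *
      t ^ (\<Sum>a<card C. (n ^ 3 + 1) * sl J ! \<sigma> a + sqdist (sl R ! a) (sl J ! \<sigma> a)))"
  proof (intro sum.cong refl)
    fix J
    have "sl R ! a < n" if "a < card C" for a
      using R RC sl_nth_mem[of R a] that finite_subset by auto
    then have "(\<forall>a<card C. sl J ! \<sigma> a \<le> sl R ! a \<and> sl R ! a < n) \<longleftrightarrow>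
        (\<forall>a<card C. sl J ! \<sigma> a \<le> sl R ! a)" for \<sigma>
      by blast
    then show "minor (lower_kernel n t) R J * minor X J C = (\<Sum>\<sigma> | \<sigma> permutes {..<card C}.
      (if \<forall>a<card C. sl J ! \<sigma> a \<le> sl R ! a then of_int (sign \<sigma>) else 0) * minor X J C *
      t ^ (\<Sum>a<card C. (n ^ 3 + 1) * sl J ! \<sigma> a + sqdist (sl R ! a) (sl J ! \<sigma> a)))"
      using RC by (simp add: minor_monomial_matrix[OF lower_kernel_def] sum_distrib_left sum_distrib_right mult_ac)
  qed
  finally show ?thesis .
qed

lemma lower_kernel_exponent_less:
  fixes R J :: "nat set"
  assumes R: "R \<subseteq> {..<n}" "card R = k" and J: "J \<subseteq> {..<n}" "card J = k"
    and \<sigma>: "\<sigma> permutes {..<k}" and ne: "J \<noteq> {..<k} \<or> \<sigma> \<noteq> id"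
  shows "(\<Sum>a<k. (n ^ 3 + 1) * a + sqdist (sl R ! a) a) <
    (\<Sum>a<k. (n ^ 3 + 1) * sl J ! \<sigma> a + sqdist (sl R ! a) (sl J ! \<sigma> a))"
proof -
  define N where "N = n ^ 3 + 1"
  have finR: "finite R" and finJ: "finite J" using R J finite_subset by auto
  have k: "k \<le> n" using R card_le_if_subset_lessThan by blast
  have "(\<Sum>a<k. sqdist (sl R ! a) a) \<le> (\<Sum>a<k. n\<^sup>2)"
    using R k sl_nth_mem[OF finR] by (intro sum_mono sqdist_le) auto
  also have "\<dots> \<le> n ^ 3"
    using k by (simp add: power3_eq_cube power2_eq_square)
  finally have bound: "(\<Sum>a<k. sqdist (sl R ! a) a) < N" by (simp add: N_def)
  have perm: "(\<Sum>a<k. sl J ! \<sigma> a) = (\<Sum>a<k. sl J ! a)"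
    using sum.permute[OF \<sigma>, of "\<lambda>a. sl J ! a"] by (simp add: comp_def)
  have split: "(\<Sum>a<k. N * f a + g a) = N * (\<Sum>a<k. f a) + (\<Sum>a<k. g a)" for f g :: "nat \<Rightarrow> nat"
    by (simp add: sum.distrib sum_distrib_left)
  show ?thesis
    unfolding N_def[symmetric] split perm
  proof (cases "J = {..<k}")
    case False
    have "(\<Sum>a<k. a) < (\<Sum>a<k. sl J ! a)"
      using sum_sl_nth_gt[OF finJ J(2) False] .
    then have "N * (\<Sum>a<k. a) + N \<le> N * (\<Sum>a<k. sl J ! a)"
      by (metis Suc_le_eq mult_Suc_right mult_le_mono2 add.commute)
    then show "N * (\<Sum>a<k. a) + (\<Sum>a<k. sqdist (sl R ! a) a) <
        N * (\<Sum>a<k. sl J ! a) + (\<Sum>a<k. sqdist (sl R ! a) (sl J ! \<sigma> a))"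
      using bound by linarith
  next
    case True
    then have "\<sigma> \<noteq> id" using ne by blast
    have "(\<Sum>a<k. sqdist (sl R ! a) a) < (\<Sum>a<k. sqdist (sl R ! a) (\<sigma> a))"
      using R \<sigma> \<open>\<sigma> \<noteq> id\<close> by (intro sum_sqdist_permute_less) (auto intro: sl_nth_strict_mono finR)
    moreover have "sl J ! \<sigma> a = \<sigma> a" if "a < k" for a
      using True permutes_in_image[OF \<sigma>, of a] that by (simp add: sl_lessThan_nth)
    ultimately show "N * (\<Sum>a<k. a) + (\<Sum>a<k. sqdist (sl R ! a) a) <
        N * (\<Sum>a<k. sl J ! a) + (\<Sum>a<k. sqdist (sl R ! a) (sl J ! \<sigma> a))"
      using True by (simp add: sl_lessThan_nth)
  qed
qed

lemma eventually_minor_matmul_lower_kernel_pos: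
  assumes X: "\<forall>I\<subseteq>{..<n}. 0 < flag_minor X I"
    and R: "R \<subseteq> {..<n}" and C: "C \<subseteq> {..<n}" and RC: "card R = card C"
  shows "\<forall>\<^sub>F t in at_right 0. 0 < minor (matmul n (lower_kernel n t) X) R C"
proof -
  define k where "k = card C"
  define P where "P = {J. J \<subseteq> {..<n} \<and> card J = k} \<times> {\<sigma>. \<sigma> permutes {..<k}}"
  define c where "c = (\<lambda>(J, \<sigma> :: nat \<Rightarrow> nat).
    (if \<forall>a<k. sl J ! \<sigma> a \<le> sl R ! a then of_int (sign \<sigma>) else 0) * minor X J C)"
  define e where "e = (\<lambda>(J, \<sigma>). \<Sum>a<k. (n ^ 3 + 1) * sl J ! \<sigma> a + sqdist (sl R ! a) (sl J ! \<sigma> a))"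
  have expand: "minor (matmul n (lower_kernel n t) X) R C = (\<Sum>x\<in>P. c x * t ^ e x)" for t
    unfolding minor_matmul_lower_kernel[OF R RC] P_def c_def e_def k_def
    by (simp add: sum.cartesian_product split_def)
  have fin: "finite P"
    unfolding P_def by (auto intro: finite_subset[of _ "Pow {..<n}"] simp: finite_permutations)
  have k: "k \<le> n" "card R = k" using C RC card_le_if_subset_lessThan unfolding k_def by auto
  have x0: "({..<k}, id) \<in> P" "0 < c ({..<k}, id)"
  proof -
    have "a \<le> sl R ! a" if "a < k" for a
      using sl_nth_ge[of R a] R k that finite_subset by auto
    then show "0 < c ({..<k}, id)"
      using X C by (simp add: c_def sl_lessThan_nth flag_minor_def k_def)
  qed (use k in \<open>simp add: P_def permutes_id\<close>)
  have e_less: "e ({..<k}, id) < e x" if "x \<in> P" "x \<noteq> ({..<k}, id)" for x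
    using that lower_kernel_exponent_less[OF R(1) k(2)]
    by (auto simp: P_def e_def sl_lessThan_nth)
  show ?thesis
    unfolding expand
  proof (rule eventually_sum_powers_pos_lowest_order[OF fin x0(1)])
    show "c ({..<k}, id) \<noteq> 0" using x0(2) by simp
    fix x assume "x \<in> P" "c x \<noteq> 0" "\<And>y. y \<in> P \<Longrightarrow> c y \<noteq> 0 \<Longrightarrow> e x \<le> e y"
    then have "x = ({..<k}, id)"
      using e_less x0 by (metis less_le_not_le less_irrefl)
    then show "0 < c x" using x0(2) by simp
  qed
qed

lemma exists_totally_positive_matmul_lower_kernel:
  assumes pos: "\<forall>I\<subseteq>{..<n}. 0 < flag_minor X I"
  shows "\<exists>t>0. totally_positive n (matmul n (lower_kernel n t) X)"
proof -
  define Q where "Q = {(R, C). R \<subseteq> {..<n} \<and> C \<subseteq> {..<n} \<and> card R = card C}"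
  have "finite Q"
    unfolding Q_def by (rule finite_subset[of _ "Pow {..<n} \<times> Pow {..<n}"]) auto
  moreover have "\<forall>x\<in>Q. \<forall>\<^sub>F t in at_right 0. case x of (R, C) \<Rightarrow> 0 < minor (matmul n (lower_kernel n t) X) R C"
  proof
    fix x assume "x \<in> Q"
    then obtain R C where "x = (R, C)" "R \<subseteq> {..<n}" "C \<subseteq> {..<n}" "card R = card C"
      unfolding Q_def by blast
    then show "\<forall>\<^sub>F t in at_right 0. case x of (R, C) \<Rightarrow> 0 < minor (matmul n (lower_kernel n t) X) R C"
      using eventually_minor_matmul_lower_kernel_pos[OF pos] by simp
  qed
  ultimately have ev: "\<forall>\<^sub>F t in at_right 0. \<forall>(R, C)\<in>Q. 0 < minor (matmul n (lower_kernel n t) X) R C"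
    by (rule eventually_ball_finite)
  have "\<exists>t. 0 < t \<and> (\<forall>(R, C)\<in>Q. 0 < minor (matmul n (lower_kernel n t) X) R C)"
    by (rule eventually_happens'[OF _ eventually_conj[OF eventually_at_right_less ev]]) simp
  then obtain t where t: "0 < t" "\<forall>(R, C)\<in>Q. 0 < minor (matmul n (lower_kernel n t) X) R C"
    by blast
  have "totally_positive n (matmul n (lower_kernel n t) X)"
    unfolding totally_positive_def
  proof (intro allI impI)
    fix R C assume "R \<subseteq> {..<n} \<and> C \<subseteq> {..<n} \<and> R \<noteq> {} \<and> card R = card C"
    then have "(R, C) \<in> Q" by (simp add: Q_def)
    then show "0 < minor (matmul n (lower_kernel n t) X) R C" using t(2) by auto
  qed
  then show ?thesis using t(1) by blast
qed

lemma flag_of_in_Fl_pos_if_flag_minors_pos: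
  assumes X: "X \<in> sqmats n" and pos: "\<forall>I\<subseteq>{..<n}. 0 < flag_minor X I"
  shows "flag_of n X \<in> Fl_pos n"
proof -
  obtain t where t: "0 < t" "totally_positive n (matmul n (lower_kernel n t) X)"
    using exists_totally_positive_matmul_lower_kernel[OF pos] by blast
  define Y where "Y = matmul n (lower_kernel n t) X"
  have L: "lower_triangular n (lower_kernel n t)" "\<And>i. i < n \<Longrightarrow> lower_kernel n t i i \<noteq> 0"
    using t(1) by (auto simp: lower_triangular_def lower_kernel_def)
  have "Y \<in> GLn n"
  proof (rule GLn_if_flag_minor_lessThan_pos)
    show "Y \<in> sqmats n"
      unfolding Y_def using X by (intro matmul_in_sqmats) (auto simp: sqmats_def lower_kernel_def)
    have "0 < (\<Prod>a<n. lower_kernel n t a a)"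
      using t(1) by (intro prod_pos) (simp add: lower_kernel_def)
    then show "0 < flag_minor Y {..<n}"
      using pos unfolding Y_def flag_minor_matmul_lower_triangular[OF L(1) order_refl] by simp
  qed
  moreover have "flag_of n Y = flag_of n X"
    unfolding Y_def by (rule flag_of_matmul_lower_triangular[OF L])
  ultimately show ?thesis
    using t(2) unfolding Fl_pos_def Y_def by (intro image_eqI[of _ _ Y]) (simp_all add: Y_def)
qed

section \<open>The topology of the flag variety\<close>

lemma openin_Fl_topology:
  "openin (Fl_topology n) U \<longleftrightarrow>
     U \<subseteq> Fl n \<and> openin (top_of_set (GLn n)) {M \<in> GLn n. flag_of n M \<in> U}"
proof -
  define P where "P = (\<lambda>U. U \<subseteq> Fl n \<and> openin (top_of_set (GLn n)) {M \<in> GLn n. flag_of n M \<in> U})"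
  have "P (S \<inter> T)" if "P S" "P T" for S T
  proof -
    have "{M \<in> GLn n. flag_of n M \<in> S \<inter> T} =
        {M \<in> GLn n. flag_of n M \<in> S} \<inter> {M \<in> GLn n. flag_of n M \<in> T}" by auto
    then show ?thesis using that by (auto simp: P_def intro: openin_Int)
  qed
  moreover have "P (\<Union>\<K>)" if "\<forall>S\<in>\<K>. P S" for \<K>
  proof -
    have "{M \<in> GLn n. flag_of n M \<in> \<Union>\<K>} = (\<Union>S\<in>\<K>. {M \<in> GLn n. flag_of n M \<in> S})" by auto
    then show ?thesis using that by (auto simp: P_def intro: openin_Union)
  qed
  ultimately have "istopology P"
    unfolding istopology_def by blast
  then have "openin (topology P) = P"
    by (rule topology_inverse')
  then show ?thesis
    unfolding Fl_topology_def P_def by simp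
qed

lemma flag_of_in_Fl: "M \<in> GLn n \<Longrightarrow> flag_of n M \<in> Fl n"
  unfolding Fl_def by blast

lemma topspace_Fl_topology: "topspace (Fl_topology n) = Fl n"
proof -
  have "{M \<in> GLn n. flag_of n M \<in> Fl n} = GLn n"
    using flag_of_in_Fl by auto
  then have "openin (Fl_topology n) (Fl n)"
    unfolding openin_Fl_topology by simp
  then show ?thesis
    using openin_subset openin_Fl_topology by (metis subset_antisym openin_topspace)
qed

lemma closedin_Fl_Pluecker_nonneg: "closedin (Fl_topology n) (Fl_Pluecker_nonneg n)"
proof -
  have "{M \<in> GLn n. flag_of n M \<in> Fl n - Fl_Pluecker_nonneg n} = GLn n \<inter> - {A. flag_minors_sign_coherent n A}"
    using flag_of_in_Fl flag_of_in_Fl_Pluecker_nonneg_iff by auto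
  moreover have "open (- {A. flag_minors_sign_coherent n A})"
    using closed_flag_minors_sign_coherent by (simp add: open_Compl)
  ultimately have "openin (Fl_topology n) (Fl n - Fl_Pluecker_nonneg n)"
    unfolding openin_Fl_topology by (simp add: openin_open_Int)
  then show ?thesis
    unfolding closedin_def topspace_Fl_topology by (auto simp: Fl_Pluecker_nonneg_def)
qed

lemma Fl_nonneg_subset_Fl_Pluecker_nonneg: "Fl_nonneg n \<subseteq> Fl_Pluecker_nonneg n"
  unfolding Fl_nonneg_def
  by (rule closure_of_minimal[OF Fl_pos_subset_Fl_Pluecker_nonneg closedin_Fl_Pluecker_nonneg])

lemma Fl_Pluecker_nonneg_subset_Fl_nonneg: "Fl_Pluecker_nonneg n \<subseteq> Fl_nonneg n"
proof
  fix F assume "F \<in> Fl_Pluecker_nonneg n"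
  then obtain M where F: "F \<in> Fl n" "M \<in> GLn n" "flag_of n M = F" "\<forall>I\<subseteq>{..<n}. 0 \<le> flag_minor M I"
    unfolding Fl_Pluecker_nonneg_def by blast
  have "\<exists>G. G \<in> Fl_pos n \<and> G \<in> T" if T: "F \<in> T" "openin (Fl_topology n) T" for T
  proof -
    obtain U where U: "open U" "{M \<in> GLn n. flag_of n M \<in> T} = GLn n \<inter> U"
      using T(2) unfolding openin_Fl_topology openin_open by blast
    then have "M \<in> U" using F T(1) by blast
    then obtain X where X: "X \<in> U \<inter> GLn n" "\<forall>I\<subseteq>{..<n}. 0 < flag_minor X I"
      using exists_flag_minors_pos_near[OF F(2,4) U(1)] by blast
    then have "flag_of n X \<in> T" using U(2) by blast
    moreover have "flag_of n X \<in> Fl_pos n"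
      using X by (intro flag_of_in_Fl_pos_if_flag_minors_pos) (auto simp: GLn_def)
    ultimately show ?thesis by blast
  qed
  then show "F \<in> Fl_nonneg n"
    unfolding Fl_nonneg_def in_closure_of topspace_Fl_topology using F(1) by blast
qed

theorem mainTheorem1:
  fixes n :: nat
  assumes "n \<ge> 1"
  shows "Fl_nonneg n =
    {F \<in> Fl n. \<exists>M \<in> GLn n. flag_of n M = F \<and> (\<forall>I \<subseteq> {..<n}. flag_minor M I \<ge> 0)}"
  using subset_antisym[OF Fl_nonneg_subset_Fl_Pluecker_nonneg Fl_Pluecker_nonneg_subset_Fl_nonneg]
  unfolding Fl_Pluecker_nonneg_def .

end
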